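(* Let $a_0,a_1,a_2$ be complex numbers with $a_1\neq 0$ and $a_2\neq 0$. Let $(F(n,k))_{n\ge 0,\,k\in\mathbb{Z}}$ be defined by $F(0,0)=1$, $F(0,k)=0$ for $k\neq 0$, $F(n,k)=0$ for $k<0$, and for $n\ge 1$ and all $k$, \[ F(n,k)=(a_2 n+a_1 k+a_0)\,F(n-1,k)+F(n-1,k-1). \] Then for all integers $n,k\ge 0$, \[ F(n,k)=\frac{1}{a_1^k\,k!}\sum_{j=0}^{k}(-1)^{k-j}\binom{k}{j}\prod_{r=1}^{n}\bigl(a_0+a_1 j+r a_2\bigr). \]
   Context: For $n=0$ the empty product equals $1$. *)

theory Defs
  imports Complex_Main
begin

fun F :: "complex \<Rightarrow> complex \<Rightarrow> complex \<Rightarrow> nat \<Rightarrow> int \<Rightarrow> complex" where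
  "F a0 a1 a2 0 k = (if k = 0 then 1 else 0)"
| "F a0 a1 a2 (Suc n) k =
     (if k < 0 then 0
      else (a2 * of_nat (Suc n) + a1 * of_int k + a0) * F a0 a1 a2 n k
           + F a0 a1 a2 n (k - 1))"

end

theory Submission
  imports Defs
begin

text \<open>Write \<open>p\<^sub>n(x) = \<Prod>r=1..n. (a0 + a1 x + r a2)\<close>, so that
  \<open>p\<^sub>n\<^sub>+\<^sub>1(x) = (a0 + (n+1) a2 + a1 x) p\<^sub>n(x)\<close>. The sum in the theorem is the
  \<open>k\<close>-th forward difference \<open>\<Delta>\<^sup>k p\<^sub>n(0)\<close>, and the discrete Leibniz rule
  \<open>\<Delta>\<^sup>k (x f)(0) = k (\<Delta>\<^sup>k f(0) + \<Delta>\<^sup>k\<^sup>-\<^sup>1 f(0))\<close> shows that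
  \<open>a1\<^sup>k k! F(n,k)\<close> and \<open>\<Delta>\<^sup>k p\<^sub>n(0)\<close> obey the same recurrence in \<open>n\<close>.
  This identity holds without any hypothesis on \<open>a1, a2\<close>.\<close>

definition fwd_diff :: "nat \<Rightarrow> (nat \<Rightarrow> 'a::comm_ring_1) \<Rightarrow> 'a" where
  "fwd_diff k f = (\<Sum>j=0..k. (-1) ^ (k - j) * of_nat (k choose j) * f j)"

lemma fwd_diff_add: "fwd_diff k (\<lambda>j. f j + g j) = fwd_diff k f + fwd_diff k g"
  by (simp add: fwd_diff_def algebra_simps sum.distrib)

lemma fwd_diff_cmult: "fwd_diff k (\<lambda>j. c * f j) = c * fwd_diff k f"
  by (simp add: fwd_diff_def sum_distrib_left algebra_simps)

lemma fwd_diff_const_one: "fwd_diff k (\<lambda>_. 1) = (if k = 0 then 1 else 0)"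
proof -
  have "(1 + (-1)) ^ k = (\<Sum>j\<le>k. of_nat (k choose j) * 1 ^ j * (-1 :: 'a) ^ (k - j))"
    by (rule binomial_ring)
  then show ?thesis
    by (cases k) (simp_all add: fwd_diff_def atLeast0AtMost mult.commute)
qed

lemma fwd_diff_0_mult_of_nat: "fwd_diff 0 (\<lambda>j. of_nat j * f j) = 0"
  by (simp add: fwd_diff_def)

lemma fwd_diff_Suc_mult_of_nat:
  "fwd_diff (Suc k) (\<lambda>j. of_nat j * f j) = of_nat (Suc k) * (fwd_diff (Suc k) f + fwd_diff k f)"
proof -
  have absorb: "of_nat j * of_nat (Suc k choose j)
      = of_nat (Suc k) * (of_nat (Suc k choose j) - of_nat (k choose j) :: 'a)"
    if "j \<le> Suc k" for j
  proof -
    have "(Suc k - j) * (Suc k choose j) = Suc k * (k choose j)"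
      using binomial_absorb_comp[of "Suc k" j] by simp
    then have "j * (Suc k choose j) + Suc k * (k choose j) = Suc k * (Suc k choose j)"
      using that by (metis add_mult_distrib le_add_diff_inverse)
    then have "of_nat j * of_nat (Suc k choose j) + of_nat (Suc k) * of_nat (k choose j)
        = (of_nat (Suc k) * of_nat (Suc k choose j) :: 'a)"
      by (metis of_nat_add of_nat_mult)
    then show ?thesis
      by (simp add: algebra_simps eq_diff_eq)
  qed
  have sign: "(-1) ^ (Suc k - j) = - ((-1) ^ (k - j) :: 'a)" if "j \<le> k" for j
    using that by (simp add: Suc_diff_le)
  have "fwd_diff (Suc k) (\<lambda>j. of_nat j * f j)
      = (\<Sum>j=0..Suc k. of_nat (Suc k) * ((-1) ^ (Suc k - j) * of_nat (Suc k choose j) * f j)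
          - of_nat (Suc k) * ((-1) ^ (Suc k - j) * of_nat (k choose j) * f j))"
  proof (unfold fwd_diff_def, rule sum.cong)
    fix j
    assume "j \<in> {0..Suc k}"
    have "(-1) ^ (Suc k - j) * of_nat (Suc k choose j) * (of_nat j * f j)
        = (-1) ^ (Suc k - j) * f j * (of_nat j * of_nat (Suc k choose j))"
      by (simp only: ac_simps)
    also have "\<dots> = (-1) ^ (Suc k - j) * f j * (of_nat (Suc k) * (of_nat (Suc k choose j) - of_nat (k choose j)))"
      using \<open>j \<in> {0..Suc k}\<close> by (simp add: absorb)
    finally show "(-1) ^ (Suc k - j) * of_nat (Suc k choose j) * (of_nat j * f j)
        = of_nat (Suc k) * ((-1) ^ (Suc k - j) * of_nat (Suc k choose j) * f j)
          - of_nat (Suc k) * ((-1) ^ (Suc k - j) * of_nat (k choose j) * f j)"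
      by (simp add: algebra_simps)
  qed simp
  also have "\<dots> = of_nat (Suc k) * fwd_diff (Suc k) f
      - of_nat (Suc k) * (\<Sum>j=0..k. (-1) ^ (Suc k - j) * of_nat (k choose j) * f j)"
    by (simp add: fwd_diff_def sum_subtractf sum_distrib_left binomial_eq_0 distrib_left)
  also have "(\<Sum>j=0..k. (-1) ^ (Suc k - j) * of_nat (k choose j) * f j) = - fwd_diff k f"
    by (simp add: fwd_diff_def sign sum_negf[symmetric])
  finally show ?thesis
    by (simp add: algebra_simps)
qed

lemma F_negative: "k < 0 \<Longrightarrow> F a0 a1 a2 n k = 0"
  by (cases n) auto

lemma fwd_diff_prod_eq_F:
  "fwd_diff k (\<lambda>j. \<Prod>r=1..n. a0 + a1 * of_nat j + of_nat r * a2)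
     = a1 ^ k * fact k * F a0 a1 a2 n (int k)"
proof (induction n arbitrary: k)
  case 0
  show ?case
    by (simp add: fwd_diff_const_one)
next
  case (Suc n)
  define p where "p j = (\<Prod>r=1..n. a0 + a1 * of_nat j + of_nat r * a2)" for j :: nat
  define c where "c = a0 + of_nat (Suc n) * a2"
  have IH: "fwd_diff k p = a1 ^ k * fact k * F a0 a1 a2 n (int k)" for k
    using Suc.IH unfolding p_def .
  have "(\<lambda>j. \<Prod>r=1..Suc n. a0 + a1 * of_nat j + of_nat r * a2) = (\<lambda>j. c * p j + a1 * (of_nat j * p j))"
    by (simp add: p_def c_def algebra_simps)
  then have fwd_diff_Suc_n: "fwd_diff k (\<lambda>j. \<Prod>r=1..Suc n. a0 + a1 * of_nat j + of_nat r * a2)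
      = c * fwd_diff k p + a1 * fwd_diff k (\<lambda>j. of_nat j * p j)" for k
    by (simp add: fwd_diff_add fwd_diff_cmult)
  show ?case
  proof (cases k)
    case 0
    show ?thesis
      unfolding 0 fwd_diff_Suc_n fwd_diff_0_mult_of_nat by (simp add: IH F_negative c_def algebra_simps)
  next
    case (Suc m)
    show ?thesis
      unfolding Suc fwd_diff_Suc_n fwd_diff_Suc_mult_of_nat by (simp add: IH c_def algebra_simps)
  qed
qed

theorem mainTheorem1:
  fixes a0 a1 a2 :: complex and n k :: nat
  assumes "a1 \<noteq> 0" and "a2 \<noteq> 0"
  shows "F a0 a1 a2 n (int k) =
    (1 / (a1 ^ k * of_nat (fact k))) *
    (\<Sum>j=0..k. (-1) ^ (k - j) * of_nat (k choose j) *
        (\<Prod>r=1..n. a0 + a1 * of_nat j + of_nat r * a2))"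
  using fwd_diff_prod_eq_F[where k = k and n = n] assms(1)
  by (simp add: fwd_diff_def field_simps)

end
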